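(* Let $R=\mathsf k[x_1,\ldots,x_n]$ and let $I\subseteq R$ be an ideal generated by square-free monomials $m_1,\ldots,m_q$ satisfying $m_b\mid\mathrm{lcm}(m_i:i\in B)$ for every $(b,B)\in\mathcal{D}$, where $\mathcal{D}$ is a finite subset of $[q]\times(2^{[q]}\smallsetminus\{\emptyset\})$. Then: (1) $\psi_I(\varepsilon_{\mathcal{D},i})=\psi_I(\epsilon_i)=m_i$ for all $i\in[q]$; (2) $\psi_I(\varepsilon_{\mathcal{D}}^{\mathbf a})=\mathbf m^{\mathbf a}$ for each $\mathbf a\in\mathcal N^r_q$, $r\ge 1$; (3) $\psi_I(\mathcal{E}_{\mathcal{D}}^r)R=I^r$ for every $r>0$; (4) $\psi_I(\mathrm{lcm}(\varepsilon_{\mathcal{D}}^{\mathbf a_1},\ldots,\varepsilon_{\mathcal{D}}^{\mathbf a_t}))=\mathrm{lcm}(\mathbf m^{\mathbf a_1},\ldots,\mathbf m^{\mathbf a_t})$ for all $r\ge1$, $t\ge1$ and $\mathbf a_1,\ldots,\mathbf a_t\in\mathcal N^r_q$.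
   Context: $S_{[q]}=\mathsf k[y_A:\emptyset\ne A\subseteq[q]]$ over a field $\mathsf k$. $\epsilon_i=\prod_{\emptyset\ne A\subseteq[q],\,i\in A}y_A$. $Q(\mathcal{D})=\{A\subseteq[q]:A\ne\emptyset,\ A\cap B\ne\emptyset\text{ for all }(b,B)\in\mathcal{D}\text{ with }b\in A\}$; $\varepsilon_{\mathcal{D},i}=\prod_{A\in Q(\mathcal{D}),\,i\in A}y_A$; $\mathcal{E}_{\mathcal{D}}=(\varepsilon_{\mathcal{D},1},\ldots,\varepsilon_{\mathcal{D},q})$. $\mathcal N^r_q=\{\mathbf a\in\mathbb N^q:a_1+\dots+a_q=r\}$, $\varepsilon_{\mathcal{D}}^{\mathbf a}=\prod_i\varepsilon_{\mathcal{D},i}^{a_i}$, $\mathbf m^{\mathbf a}=\prod_i m_i^{a_i}$. For $k\in[n]$, $\mathcal A_k=\{j\in[q]:x_k\mid m_j\}$. $\psi_I:S_{[q]}\to R$ is the $\mathsf k$-algebra homomorphism with $\psi_I(y_A)=\prod_{k\in[n],\,\mathcal A_k=A}x_k$ if $A=\mathcal A_k$ for some $k\in[n]$, and $\psi_I(y_A)=1$ otherwise. *)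

theory Defs
  imports "HOL-Library.Poly_Mapping"
begin

type_synonym ('v, 'k) mpoly = "('v \<Rightarrow>\<^sub>0 nat) \<Rightarrow>\<^sub>0 'k"

text \<open>Polynomials involving only variables from V (e.g. k[x_1..x_n] with V = {1..n}).\<close>
definition polys :: "'v set \<Rightarrow> ('v, 'k::zero) mpoly set" where
  "polys V = {p. \<forall>\<alpha>\<in>Poly_Mapping.keys p. Poly_Mapping.keys \<alpha> \<subseteq> V}"

definition mon :: "('v \<Rightarrow>\<^sub>0 nat) \<Rightarrow> ('v, 'k::{zero,one}) mpoly" where
  "mon \<alpha> = Poly_Mapping.single \<alpha> 1"

definition var :: "'v \<Rightarrow> ('v, 'k::{zero,one}) mpoly" where
  "var v = mon (Poly_Mapping.single v 1)"

definition is_monomial :: "('v, 'k::{zero,one}) mpoly \<Rightarrow> bool" where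
  "is_monomial p \<longleftrightarrow> (\<exists>\<alpha>. p = mon \<alpha>)"

definition squarefree_monomial_in :: "'v set \<Rightarrow> ('v, 'k::{zero,one}) mpoly \<Rightarrow> bool" where
  "squarefree_monomial_in V p \<longleftrightarrow>
     (\<exists>\<alpha>. p = mon \<alpha> \<and> Poly_Mapping.keys \<alpha> \<subseteq> V \<and> (\<forall>v. Poly_Mapping.lookup \<alpha> v \<le> 1))"

text \<open>k-algebra homomorphism determined by the images g v of the variables.\<close>
definition subst :: "('v \<Rightarrow> ('w, 'k::comm_ring_1) mpoly) \<Rightarrow> ('v, 'k) mpoly \<Rightarrow> ('w, 'k) mpoly" where
  "subst g p = (\<Sum>\<alpha>\<in>Poly_Mapping.keys p. Poly_Mapping.single 0 (Poly_Mapping.lookup p \<alpha>) * (\<Prod>v\<in>Poly_Mapping.keys \<alpha>. g v ^ Poly_Mapping.lookup \<alpha> v))"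

definition gen_ideal :: "'a::comm_ring_1 set \<Rightarrow> 'a set \<Rightarrow> 'a set" where
  "gen_ideal C G = {x. \<exists>F c. finite F \<and> F \<subseteq> G \<and> (\<forall>f\<in>F. c f \<in> C) \<and> x = (\<Sum>f\<in>F. c f * f)}"

definition ideal_pow :: "'a::comm_ring_1 set \<Rightarrow> 'a set \<Rightarrow> nat \<Rightarrow> 'a set" where
  "ideal_pow C J r = gen_ideal C {(\<Prod>i<r. f i) | f. \<forall>i<r. f i \<in> J}"

definition mon_lcm :: "('v, 'k::comm_ring_1) mpoly set \<Rightarrow> ('v, 'k) mpoly" where
  "mon_lcm S = (THE L. is_monomial L \<and> (\<forall>s\<in>S. s dvd L) \<and>
      (\<forall>M. is_monomial M \<and> (\<forall>s\<in>S. s dvd M) \<longrightarrow> L dvd M))"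

text \<open>Variables y_A of S_[q], indexed by nonempty subsets A of [q] = {1..q}.\<close>
definition Yvars :: "nat \<Rightarrow> nat set set" where
  "Yvars q = {A. A \<noteq> {} \<and> A \<subseteq> {1..q}}"

definition eps :: "nat \<Rightarrow> nat \<Rightarrow> (nat set, 'k::comm_ring_1) mpoly" where
  "eps q i = (\<Prod>A\<in>{A\<in>Yvars q. i \<in> A}. var A)"

definition QD :: "nat \<Rightarrow> (nat \<times> nat set) set \<Rightarrow> nat set set" where
  "QD q D = {A\<in>Yvars q. \<forall>(b,B)\<in>D. b \<in> A \<longrightarrow> A \<inter> B \<noteq> {}}"

definition epsD :: "nat \<Rightarrow> (nat \<times> nat set) set \<Rightarrow> nat \<Rightarrow> (nat set, 'k::comm_ring_1) mpoly" where
  "epsD q D i = (\<Prod>A\<in>{A\<in>QD q D. i \<in> A}. var A)"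

definition epsD_pow :: "nat \<Rightarrow> (nat \<times> nat set) set \<Rightarrow> (nat \<Rightarrow> nat) \<Rightarrow> (nat set, 'k::comm_ring_1) mpoly" where
  "epsD_pow q D a = (\<Prod>i\<in>{1..q}. epsD q D i ^ a i)"

definition ED :: "nat \<Rightarrow> (nat \<times> nat set) set \<Rightarrow> (nat set, 'k::comm_ring_1) mpoly set" where
  "ED q D = gen_ideal (polys (Yvars q)) (epsD q D ` {1..q})"

definition mpow :: "nat \<Rightarrow> (nat \<Rightarrow> ('v, 'k::comm_ring_1) mpoly) \<Rightarrow> (nat \<Rightarrow> nat) \<Rightarrow> ('v, 'k) mpoly" where
  "mpow q m a = (\<Prod>i\<in>{1..q}. m i ^ a i)"

text \<open>N^r_q as functions on indices (only values on [q] matter).\<close>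
definition Nrq :: "nat \<Rightarrow> nat \<Rightarrow> (nat \<Rightarrow> nat) set" where
  "Nrq q r = {a. (\<Sum>i\<in>{1..q}. a i) = r}"

definition calA :: "nat \<Rightarrow> (nat \<Rightarrow> (nat, 'k::comm_ring_1) mpoly) \<Rightarrow> nat \<Rightarrow> nat set" where
  "calA q m k = {j\<in>{1..q}. var k dvd m j}"

definition psi_var :: "nat \<Rightarrow> nat \<Rightarrow> (nat \<Rightarrow> (nat, 'k::comm_ring_1) mpoly) \<Rightarrow> nat set \<Rightarrow> (nat, 'k) mpoly" where
  "psi_var n q m A = (if \<exists>k\<in>{1..n}. A = calA q m k
      then (\<Prod>k\<in>{k\<in>{1..n}. calA q m k = A}. var k) else 1)"

definition psi :: "nat \<Rightarrow> nat \<Rightarrow> (nat \<Rightarrow> (nat, 'k::comm_ring_1) mpoly) \<Rightarrow> (nat set, 'k) mpoly \<Rightarrow> (nat, 'k) mpoly" where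
  "psi n q m = subst (psi_var n q m)"

end

theory Submission
  imports Defs
begin

(*
  The map \<psi>\<^sub>I sends y\<^sub>A to the product of the variables x\<^sub>k with \<A>\<^sub>k = A.
  These fibres are disjoint, so \<psi>\<^sub>I sends the monomial y\<^sup>b to the monomial
  whose exponent at x\<^sub>k is b(\<A>\<^sub>k); hence it commutes with lcms of monomials,
  and (4) follows from (2).

  A product of the y\<^sub>A over a family F of sets is sent to the product of the x\<^sub>k
  with \<A>\<^sub>k \<in> F. For F = {A. i \<in> A} these are exactly the variables dividing the
  squarefree monomial m\<^sub>i, which gives (1) for \<epsilon>\<^sub>i. The same holds for
  F = {A \<in> Q(D). i \<in> A}, because every nonempty \<A>\<^sub>k lies in Q(D): if b \<in> \<A>\<^sub>k
  and (b, B) \<in> D, then x\<^sub>k divides m\<^sub>b, hence lcm(m\<^sub>j : j \<in> B), hence some m\<^sub>j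
  with j \<in> B. Finally (2) and (3) hold because \<psi>\<^sub>I is a ring homomorphism and
  I\<^sup>r is generated by the r-fold products of the m\<^sub>i.
*)

section \<open>Substitution homomorphisms\<close>

lemma poly_mapping_eq_sum_single:
  "p = (\<Sum>\<alpha>\<in>Poly_Mapping.keys p. Poly_Mapping.single \<alpha> (Poly_Mapping.lookup p \<alpha>))"
  by (rule poly_mapping_eqI) (simp add: lookup_sum lookup_single when_def sum.delta' in_keys_iff)

definition subst_exp :: "('v \<Rightarrow> ('w, 'k::comm_ring_1) mpoly) \<Rightarrow> ('v \<Rightarrow>\<^sub>0 nat) \<Rightarrow> ('w, 'k) mpoly" where
  "subst_exp g \<alpha> = (\<Prod>v\<in>Poly_Mapping.keys \<alpha>. g v ^ Poly_Mapping.lookup \<alpha> v)"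

lemma subst_exp_superset:
  "finite S \<Longrightarrow> Poly_Mapping.keys \<alpha> \<subseteq> S \<Longrightarrow>
    subst_exp g \<alpha> = (\<Prod>v\<in>S. g v ^ Poly_Mapping.lookup \<alpha> v)"
  unfolding subst_exp_def by (rule prod.mono_neutral_left) (auto simp: in_keys_iff)

lemma subst_exp_zero [simp]: "subst_exp g 0 = 1"
  by (simp add: subst_exp_def)

lemma subst_exp_add: "subst_exp g (\<alpha> + \<beta>) = subst_exp g \<alpha> * subst_exp g \<beta>"
proof -
  let ?S = "Poly_Mapping.keys \<alpha> \<union> Poly_Mapping.keys \<beta>"
  have "finite ?S" "Poly_Mapping.keys (\<alpha> + \<beta>) \<subseteq> ?S"
    using keys_add[of \<alpha> \<beta>] by auto
  then show ?thesis
    by (simp add: subst_exp_superset[of ?S] lookup_add power_add prod.distrib)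
qed

lemma subst_superset:
  "finite S \<Longrightarrow> Poly_Mapping.keys p \<subseteq> S \<Longrightarrow>
    subst g p = (\<Sum>\<alpha>\<in>S. Poly_Mapping.single 0 (Poly_Mapping.lookup p \<alpha>) * subst_exp g \<alpha>)"
  unfolding subst_def subst_exp_def[symmetric] by (rule sum.mono_neutral_left) (auto simp: in_keys_iff)

lemma subst_single: "subst g (Poly_Mapping.single \<alpha> c) = Poly_Mapping.single 0 c * subst_exp g \<alpha>"
  by (subst subst_superset[of "{\<alpha>}"]) auto

lemma subst_zero [simp]: "subst g 0 = 0"
  by (simp add: subst_def)

lemma subst_one [simp]: "subst g 1 = 1"
  using subst_single[of g 0 1] by simp

lemma subst_add: "subst g (p + q) = subst g p + subst g q"
proof -
  let ?S = "Poly_Mapping.keys p \<union> Poly_Mapping.keys q"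
  have "finite ?S" "Poly_Mapping.keys (p + q) \<subseteq> ?S"
    using keys_add[of p q] by auto
  then show ?thesis
    by (simp add: subst_superset[of ?S] lookup_add single_add distrib_right sum.distrib)
qed

lemma subst_sum: "subst g (\<Sum>x\<in>X. f x) = (\<Sum>x\<in>X. subst g (f x))"
  by (induction X rule: infinite_finite_induct) (auto simp: subst_add)

lemma subst_mult: "subst g (p * q) = subst g p * subst g q"
proof -
  have single_0_mult: "Poly_Mapping.single 0 (a * b) =
      (Poly_Mapping.single 0 a * Poly_Mapping.single 0 b :: ('a, 'b) mpoly)" for a b
    by (simp add: mult_single)
  have "p * q = (\<Sum>\<alpha>\<in>Poly_Mapping.keys p. \<Sum>\<beta>\<in>Poly_Mapping.keys q.
      Poly_Mapping.single (\<alpha> + \<beta>) (Poly_Mapping.lookup p \<alpha> * Poly_Mapping.lookup q \<beta>))"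
    by (subst poly_mapping_eq_sum_single[of p], subst poly_mapping_eq_sum_single[of q])
       (simp add: sum_product mult_single)
  then have "subst g (p * q) = (\<Sum>\<alpha>\<in>Poly_Mapping.keys p. \<Sum>\<beta>\<in>Poly_Mapping.keys q.
      (Poly_Mapping.single 0 (Poly_Mapping.lookup p \<alpha>) * subst_exp g \<alpha>) *
      (Poly_Mapping.single 0 (Poly_Mapping.lookup q \<beta>) * subst_exp g \<beta>))"
    by (simp add: subst_sum subst_single subst_exp_add single_0_mult ac_simps)
  also have "\<dots> = subst g p * subst g q"
    by (simp add: subst_def subst_exp_def sum_product)
  finally show ?thesis .
qed

lemma subst_prod: "subst g (\<Prod>x\<in>X. f x) = (\<Prod>x\<in>X. subst g (f x))"
  by (induction X rule: infinite_finite_induct) (auto simp: subst_mult)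

lemma subst_power: "subst g (p ^ e) = subst g p ^ e"
  by (induction e) (auto simp: subst_mult)

lemma subst_var: "subst g (var v) = g v"
  by (simp add: var_def mon_def subst_single subst_exp_def)

lemma subst_mon: "subst g (mon \<alpha>) = subst_exp g \<alpha>"
  by (simp add: mon_def subst_single)

section \<open>Monomials\<close>

lemma mon_zero: "mon 0 = (1 :: ('v, 'k::comm_ring_1) mpoly)"
  by (simp add: mon_def)

lemma mon_add: "mon (\<alpha> + \<beta>) = (mon \<alpha> * mon \<beta> :: ('v, 'k::comm_ring_1) mpoly)"
  by (simp add: mon_def mult_single)

lemma prod_mon: "(\<Prod>x\<in>X. mon (f x)) = (mon (\<Sum>x\<in>X. f x) :: ('v, 'k::comm_ring_1) mpoly)"
  by (induction X rule: infinite_finite_induct) (auto simp: mon_zero mon_add)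

lemma prod_var: "(\<Prod>v\<in>X. var v) = (mon (\<Sum>v\<in>X. Poly_Mapping.single v 1) :: ('v, 'k::comm_ring_1) mpoly)"
  by (simp add: var_def prod_mon)

lemma var_power: "var v ^ e = (mon (Poly_Mapping.single v e) :: ('v, 'k::comm_ring_1) mpoly)"
  by (induction e) (simp_all add: mon_zero var_def mon_add[symmetric] single_add[symmetric])

lemma mon_eq_iff [simp]: "(mon \<alpha> :: ('v, 'k::comm_ring_1) mpoly) = mon \<beta> \<longleftrightarrow> \<alpha> = \<beta>"
  by (metis keys_single mon_def one_neq_zero singleton_inject)

lemma mon_dvd_mon_iff:
  "(mon \<alpha> :: ('v, 'k::comm_ring_1) mpoly) dvd mon \<beta> \<longleftrightarrow>
     (\<forall>v. Poly_Mapping.lookup \<alpha> v \<le> Poly_Mapping.lookup \<beta> v)"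
proof
  assume "(mon \<alpha> :: ('v, 'k) mpoly) dvd mon \<beta>"
  then obtain p where p: "mon \<beta> = (mon \<alpha> :: ('v, 'k) mpoly) * p" ..
  have "mon \<beta> = (\<Sum>\<gamma>\<in>Poly_Mapping.keys p. Poly_Mapping.single (\<alpha> + \<gamma>) (Poly_Mapping.lookup p \<gamma>))"
    unfolding p by (subst poly_mapping_eq_sum_single[of p]) (simp add: sum_distrib_left mon_def mult_single)
  then have "\<beta> \<in> (\<Union>\<gamma>\<in>Poly_Mapping.keys p.
      Poly_Mapping.keys (Poly_Mapping.single (\<alpha> + \<gamma>) (Poly_Mapping.lookup p \<gamma>)))"
    using keys_sum by (metis insertI1 keys_single mon_def one_neq_zero subsetD)
  then obtain \<gamma> where "\<beta> = \<alpha> + \<gamma>"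
    by (auto split: if_splits)
  then show "\<forall>v. Poly_Mapping.lookup \<alpha> v \<le> Poly_Mapping.lookup \<beta> v"
    by (simp add: lookup_add)
next
  assume "\<forall>v. Poly_Mapping.lookup \<alpha> v \<le> Poly_Mapping.lookup \<beta> v"
  then have "\<beta> = \<alpha> + (\<beta> - \<alpha>)"
    by (intro poly_mapping_eqI) (simp add: lookup_add lookup_minus)
  then have "mon \<beta> = mon \<alpha> * (mon (\<beta> - \<alpha>) :: ('v, 'k) mpoly)"
    by (metis mon_add)
  then show "(mon \<alpha> :: ('v, 'k) mpoly) dvd mon \<beta>" ..
qed

lemma var_dvd_mon_iff:
  "(var v :: ('v, 'k::comm_ring_1) mpoly) dvd mon \<alpha> \<longleftrightarrow> v \<in> Poly_Mapping.keys \<alpha>"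
  by (auto simp: var_def mon_dvd_mon_iff lookup_single when_def in_keys_iff)

lemma is_monomial_prod:
  "(\<And>x. x \<in> X \<Longrightarrow> is_monomial (f x :: ('v, 'k::comm_ring_1) mpoly)) \<Longrightarrow>
    is_monomial (\<Prod>x\<in>X. f x)"
proof (induction X rule: infinite_finite_induct)
  case (insert x X)
  then obtain \<alpha> \<beta> where "f x = mon \<alpha>" "(\<Prod>x\<in>X. f x) = mon \<beta>"
    unfolding is_monomial_def by blast
  with insert.hyps show ?case
    by (auto simp: is_monomial_def mon_add[symmetric])
qed (auto simp: is_monomial_def mon_zero[symmetric])

lemma is_monomial_power:
  "is_monomial (p :: ('v, 'k::comm_ring_1) mpoly) \<Longrightarrow> is_monomial (p ^ e)"
  using is_monomial_prod[of "{..<e}" "\<lambda>_. p"] by simp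

lemma is_monomial_var: "is_monomial (var v)"
  unfolding is_monomial_def var_def by blast

lemma squarefree_monomial_eq_prod_vars:
  assumes "squarefree_monomial_in V (p :: ('v, 'k::comm_ring_1) mpoly)"
  shows "p = (\<Prod>v\<in>{v\<in>V. var v dvd p}. var v)"
proof -
  obtain \<alpha> where p: "p = mon \<alpha>" and "Poly_Mapping.keys \<alpha> \<subseteq> V"
    and le1: "\<forall>v. Poly_Mapping.lookup \<alpha> v \<le> 1"
    using assms by (auto simp: squarefree_monomial_in_def)
  then have "{v\<in>V. var v dvd p} = Poly_Mapping.keys \<alpha>"
    by (auto simp: var_dvd_mon_iff)
  moreover have "\<alpha> = (\<Sum>v\<in>Poly_Mapping.keys \<alpha>. Poly_Mapping.single v 1)"
  proof (rule poly_mapping_eqI)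
    fix v
    show "Poly_Mapping.lookup \<alpha> v = Poly_Mapping.lookup (\<Sum>v\<in>Poly_Mapping.keys \<alpha>. Poly_Mapping.single v 1) v"
      using le1[rule_format, of v] by (auto simp: lookup_sum lookup_single when_def in_keys_iff)
  qed
  ultimately show ?thesis
    using p by (simp add: prod_var)
qed

definition lcm_exp :: "('v \<Rightarrow>\<^sub>0 nat) set \<Rightarrow> ('v \<Rightarrow>\<^sub>0 nat)" where
  "lcm_exp E = Abs_poly_mapping (\<lambda>v. Max ((\<lambda>\<alpha>. Poly_Mapping.lookup \<alpha> v) ` E))"

lemma lookup_lcm_exp:
  assumes "finite E" "E \<noteq> {}"
  shows "Poly_Mapping.lookup (lcm_exp E) v = Max ((\<lambda>\<alpha>. Poly_Mapping.lookup \<alpha> v) ` E)"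
proof -
  have "{v. Max ((\<lambda>\<alpha>. Poly_Mapping.lookup \<alpha> v) ` E) \<noteq> 0} \<subseteq> (\<Union>\<alpha>\<in>E. Poly_Mapping.keys \<alpha>)"
  proof
    fix v
    assume "v \<in> {v. Max ((\<lambda>\<alpha>. Poly_Mapping.lookup \<alpha> v) ` E) \<noteq> 0}"
    moreover have "Max ((\<lambda>\<alpha>. Poly_Mapping.lookup \<alpha> v) ` E) \<in> (\<lambda>\<alpha>. Poly_Mapping.lookup \<alpha> v) ` E"
      using assms by (intro Max_in) auto
    ultimately show "v \<in> (\<Union>\<alpha>\<in>E. Poly_Mapping.keys \<alpha>)"
      by (auto simp: in_keys_iff)
  qed
  then have "finite {v. Max ((\<lambda>\<alpha>. Poly_Mapping.lookup \<alpha> v) ` E) \<noteq> 0}"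
    using assms(1) by (meson finite_UN_I finite_keys finite_subset)
  then show ?thesis
    by (simp add: lcm_exp_def)
qed

lemma mon_lcm_mon:
  assumes "finite E" "E \<noteq> {}"
  shows "mon_lcm (mon ` E :: ('v, 'k::comm_ring_1) mpoly set) = mon (lcm_exp E)"
proof -
  have common_multiple_iff: "(\<forall>\<alpha>\<in>E. (mon \<alpha> :: ('v, 'k) mpoly) dvd mon \<gamma>) \<longleftrightarrow>
      (\<forall>v. Poly_Mapping.lookup (lcm_exp E) v \<le> Poly_Mapping.lookup \<gamma> v)" for \<gamma>
    using assms by (auto simp: mon_dvd_mon_iff lookup_lcm_exp)
  have least: "mon (lcm_exp E) dvd M"
    if "is_monomial M" "\<forall>s\<in>mon ` E. s dvd M" for M :: "('v, 'k) mpoly"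
  proof -
    from that obtain \<gamma> where "M = mon \<gamma>" "\<forall>\<alpha>\<in>E. (mon \<alpha> :: ('v, 'k) mpoly) dvd mon \<gamma>"
      by (auto simp: is_monomial_def)
    then show ?thesis
      using common_multiple_iff by (simp add: mon_dvd_mon_iff)
  qed
  have common: "\<forall>s\<in>mon ` E. s dvd (mon (lcm_exp E) :: ('v, 'k) mpoly)"
    using common_multiple_iff[of "lcm_exp E"] by simp
  let ?S = "mon ` E :: ('v, 'k) mpoly set"
  show ?thesis
    unfolding mon_lcm_def
  proof (rule the_equality)
    show "is_monomial (mon (lcm_exp E)) \<and> (\<forall>s\<in>?S. s dvd mon (lcm_exp E)) \<and>
        (\<forall>M. is_monomial M \<and> (\<forall>s\<in>?S. s dvd M) \<longrightarrow> mon (lcm_exp E) dvd M)"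
      using common least by (auto simp: is_monomial_def)
    fix L
    assume L: "is_monomial L \<and> (\<forall>s\<in>?S. s dvd L) \<and>
        (\<forall>M. is_monomial M \<and> (\<forall>s\<in>?S. s dvd M) \<longrightarrow> L dvd M)"
    then obtain \<gamma> where \<gamma>: "L = mon \<gamma>"
      by (auto simp: is_monomial_def)
    have "L dvd mon (lcm_exp E)"
      using L common unfolding is_monomial_def by blast
    moreover have "mon (lcm_exp E) dvd L"
      using L least by blast
    ultimately show "L = mon (lcm_exp E)"
      unfolding \<gamma> mon_dvd_mon_iff by (auto intro: poly_mapping_eqI antisym)
  qed
qed

lemma obtain_exps_of_monomials:
  fixes S :: "('v, 'k::comm_ring_1) mpoly set"
  assumes "finite S" "\<And>s. s \<in> S \<Longrightarrow> is_monomial s"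
  obtains E where "S = mon ` E" "finite E"
proof
  show "S = mon ` (mon -` S)"
    using assms(2) by (auto simp: is_monomial_def)
  show "finite (mon -` S)"
    by (rule finite_vimageI[OF assms(1)]) (auto intro: injI)
qed

lemma var_dvd_mon_lcm_iff:
  fixes S :: "('v, 'k::comm_ring_1) mpoly set"
  assumes "finite S" "S \<noteq> {}" "\<And>s. s \<in> S \<Longrightarrow> is_monomial s"
  shows "var v dvd mon_lcm S \<longleftrightarrow> (\<exists>s\<in>S. var v dvd s)"
proof -
  obtain E where S: "S = mon ` E" and "finite E"
    using obtain_exps_of_monomials assms(1,3) by blast
  with assms(2) have E: "finite E" "E \<noteq> {}"
    by auto
  have "var v dvd mon_lcm S \<longleftrightarrow> 0 < Max ((\<lambda>\<alpha>. Poly_Mapping.lookup \<alpha> v) ` E)"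
    by (simp add: S mon_lcm_mon[OF E] var_dvd_mon_iff in_keys_iff lookup_lcm_exp[OF E])
  also have "\<dots> \<longleftrightarrow> (\<exists>s\<in>S. var v dvd s)"
    using E by (simp add: S Max_gr_iff var_dvd_mon_iff in_keys_iff)
  finally show ?thesis .
qed

section \<open>Ideals generated over a subsemiring\<close>

definition is_subsemiring :: "'a::comm_ring_1 set \<Rightarrow> bool" where
  "is_subsemiring C \<longleftrightarrow> 0 \<in> C \<and> 1 \<in> C \<and> (\<forall>x\<in>C. \<forall>y\<in>C. x + y \<in> C \<and> x * y \<in> C)"

lemma subsemiring_sum:
  "is_subsemiring C \<Longrightarrow> (\<And>x. x \<in> X \<Longrightarrow> f x \<in> C) \<Longrightarrow> (\<Sum>x\<in>X. f x) \<in> C"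
  by (induction X rule: infinite_finite_induct) (auto simp: is_subsemiring_def)

lemma subsemiring_prod:
  "is_subsemiring C \<Longrightarrow> (\<And>x. x \<in> X \<Longrightarrow> f x \<in> C) \<Longrightarrow> (\<Prod>x\<in>X. f x) \<in> C"
  by (induction X rule: infinite_finite_induct) (auto simp: is_subsemiring_def)

lemma subsemiring_power: "is_subsemiring C \<Longrightarrow> x \<in> C \<Longrightarrow> x ^ e \<in> C"
  using subsemiring_prod[of C "{..<e}" "\<lambda>_. x"] by simp

lemma polys_add: "p \<in> polys V \<Longrightarrow> q \<in> polys V \<Longrightarrow> p + q \<in> polys V"
  unfolding polys_def using keys_add[of p q] by blast

lemma polys_mult: "p \<in> polys V \<Longrightarrow> q \<in> polys V \<Longrightarrow> p * q \<in> polys V"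
proof (unfold polys_def, intro CollectI ballI)
  fix \<gamma>
  assume p: "p \<in> {p. \<forall>\<alpha>\<in>Poly_Mapping.keys p. Poly_Mapping.keys \<alpha> \<subseteq> V}"
    and q: "q \<in> {q. \<forall>\<beta>\<in>Poly_Mapping.keys q. Poly_Mapping.keys \<beta> \<subseteq> V}"
    and "\<gamma> \<in> Poly_Mapping.keys (p * q)"
  then obtain \<alpha> \<beta> where "\<gamma> = \<alpha> + \<beta>" "\<alpha> \<in> Poly_Mapping.keys p" "\<beta> \<in> Poly_Mapping.keys q"
    using keys_mult[of p q] by blast
  then show "Poly_Mapping.keys \<gamma> \<subseteq> V"
    using p q keys_add[of \<alpha> \<beta>] by blast
qed

lemma polys_const: "Poly_Mapping.single 0 c \<in> polys V"
  by (simp add: polys_def)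

lemma var_in_polys: "v \<in> V \<Longrightarrow> var v \<in> polys V"
  by (simp add: polys_def var_def mon_def)

lemma is_subsemiring_polys: "is_subsemiring (polys V :: ('v, 'k::comm_ring_1) mpoly set)"
proof -
  have "0 \<in> (polys V :: ('v, 'k) mpoly set)" "1 \<in> (polys V :: ('v, 'k) mpoly set)"
    by (simp_all add: polys_def)
  then show ?thesis
    by (simp add: is_subsemiring_def polys_add polys_mult)
qed

lemma subst_in_polys: "(\<And>v. g v \<in> polys V) \<Longrightarrow> subst g p \<in> polys V"
  unfolding subst_def using is_subsemiring_polys
  by (intro subsemiring_sum subsemiring_prod subsemiring_power polys_mult polys_const) auto

lemma gen_ideal_zero: "0 \<in> gen_ideal C G"
  unfolding gen_ideal_def by (rule CollectI, rule exI[of _ "{}"]) auto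

lemma mult_generator_in_gen_ideal: "g \<in> G \<Longrightarrow> c \<in> C \<Longrightarrow> c * g \<in> gen_ideal C G"
  unfolding gen_ideal_def by (rule CollectI, rule exI[of _ "{g}"], rule exI[of _ "\<lambda>_. c"]) auto

lemma generator_in_gen_ideal: "is_subsemiring C \<Longrightarrow> g \<in> G \<Longrightarrow> g \<in> gen_ideal C G"
  using mult_generator_in_gen_ideal[of g G 1 C] by (simp add: is_subsemiring_def)

lemma gen_ideal_add:
  assumes C: "is_subsemiring C" and "x \<in> gen_ideal C G" "y \<in> gen_ideal C G"
  shows "x + y \<in> gen_ideal C G"
proof -
  obtain F1 c1 where F1: "finite F1" "F1 \<subseteq> G" "\<forall>f\<in>F1. c1 f \<in> C" "x = (\<Sum>f\<in>F1. c1 f * f)"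
    using assms(2) by (auto simp: gen_ideal_def)
  obtain F2 c2 where F2: "finite F2" "F2 \<subseteq> G" "\<forall>f\<in>F2. c2 f \<in> C" "y = (\<Sum>f\<in>F2. c2 f * f)"
    using assms(3) by (auto simp: gen_ideal_def)
  define c where "c f = (if f \<in> F1 then c1 f else 0) + (if f \<in> F2 then c2 f else 0)" for f
  have "x = (\<Sum>f\<in>F1 \<union> F2. (if f \<in> F1 then c1 f else 0) * f)"
    unfolding F1(4) by (rule sum.mono_neutral_cong_left) (use F1 F2 in auto)
  moreover have "y = (\<Sum>f\<in>F1 \<union> F2. (if f \<in> F2 then c2 f else 0) * f)"
    unfolding F2(4) by (rule sum.mono_neutral_cong_left) (use F1 F2 in auto)
  ultimately have "x + y = (\<Sum>f\<in>F1 \<union> F2. c f * f)"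
    by (simp add: c_def distrib_right sum.distrib)
  moreover have "\<forall>f\<in>F1 \<union> F2. c f \<in> C"
    using F1(3) F2(3) C by (auto simp: c_def is_subsemiring_def)
  ultimately show ?thesis
    unfolding gen_ideal_def using F1(1,2) F2(1,2)
    by (intro CollectI exI[of _ "F1 \<union> F2"] exI[of _ c]) simp
qed

lemma gen_ideal_sum:
  "is_subsemiring C \<Longrightarrow> (\<And>x. x \<in> X \<Longrightarrow> f x \<in> gen_ideal C G) \<Longrightarrow>
    (\<Sum>x\<in>X. f x) \<in> gen_ideal C G"
  by (induction X rule: infinite_finite_induct) (auto simp: gen_ideal_zero gen_ideal_add)

lemma gen_ideal_mult_left:
  assumes "is_subsemiring C" "c \<in> C" "x \<in> gen_ideal C G"
  shows "c * x \<in> gen_ideal C G"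
proof -
  obtain F c' where F: "finite F" "F \<subseteq> G" "\<forall>f\<in>F. c' f \<in> C" "x = (\<Sum>f\<in>F. c' f * f)"
    using assms(3) by (auto simp: gen_ideal_def)
  have "c * x = (\<Sum>f\<in>F. (c * c' f) * f)"
    by (simp add: F(4) sum_distrib_left ac_simps)
  moreover have "\<forall>f\<in>F. c * c' f \<in> C"
    using F(3) assms(1,2) by (auto simp: is_subsemiring_def)
  ultimately show ?thesis
    unfolding gen_ideal_def using F(1,2)
    by (intro CollectI exI[of _ F] exI[of _ "\<lambda>f. c * c' f"]) simp
qed

lemma gen_ideal_subset:
  assumes C: "is_subsemiring C" and "H \<subseteq> gen_ideal C G"
  shows "gen_ideal C H \<subseteq> gen_ideal C G"
proof
  fix x
  assume "x \<in> gen_ideal C H"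
  then obtain F c where F: "finite F" "F \<subseteq> H" "\<forall>f\<in>F. c f \<in> C" "x = (\<Sum>f\<in>F. c f * f)"
    by (auto simp: gen_ideal_def)
  show "x \<in> gen_ideal C G"
    unfolding F(4) using F(2,3) assms(2) by (intro gen_ideal_sum[OF C] gen_ideal_mult_left[OF C]) auto
qed

lemma gen_ideal_mult:
  assumes C: "is_subsemiring C" and "x \<in> gen_ideal C G" "y \<in> gen_ideal C H"
  shows "x * y \<in> gen_ideal C {g * h | g h. g \<in> G \<and> h \<in> H}"
proof -
  let ?GH = "{g * h | g h. g \<in> G \<and> h \<in> H}"
  obtain F c where F: "finite F" "F \<subseteq> G" "\<forall>f\<in>F. c f \<in> C" "x = (\<Sum>f\<in>F. c f * f)"
    using assms(2) by (auto simp: gen_ideal_def)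
  obtain F' c' where F': "finite F'" "F' \<subseteq> H" "\<forall>f\<in>F'. c' f \<in> C" "y = (\<Sum>f\<in>F'. c' f * f)"
    using assms(3) by (auto simp: gen_ideal_def)
  have "x * y = (\<Sum>f\<in>F. \<Sum>f'\<in>F'. (c f * c' f') * (f * f'))"
    unfolding F(4) F'(4) sum_product by (intro sum.cong refl) (simp add: ac_simps)
  also have "\<dots> \<in> gen_ideal C ?GH"
  proof (intro gen_ideal_sum[OF C] mult_generator_in_gen_ideal)
    fix f f'
    assume "f \<in> F" "f' \<in> F'"
    then show "f * f' \<in> ?GH"
      using F(2) F'(2) by blast
    show "c f * c' f' \<in> C" if "f \<in> F" "f' \<in> F'"
      using that F(3) F'(3) C by (simp add: is_subsemiring_def)
  qed
  finally show ?thesis .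
qed

lemma hom_in_gen_ideal:
  assumes C': "is_subsemiring C'"
    and h: "\<And>a b. h (a + b) = h a + h b" "\<And>a b. h (a * b) = h a * h b" "h 0 = 0"
    and "h ` C \<subseteq> C'" "h ` G \<subseteq> gen_ideal C' H" "x \<in> gen_ideal C G"
  shows "h x \<in> gen_ideal C' H"
proof -
  obtain F c where F: "finite F" "F \<subseteq> G" "\<forall>f\<in>F. c f \<in> C" "x = (\<Sum>f\<in>F. c f * f)"
    using assms(7) by (auto simp: gen_ideal_def)
  have h_sum: "h (\<Sum>x\<in>X. g x) = (\<Sum>x\<in>X. h (g x))" for g and X :: "'c set"
    by (induction X rule: infinite_finite_induct) (auto simp: h(1,3))
  show ?thesis
    unfolding F(4) h_sum h(2) using F(2,3) assms(5,6)
    by (intro gen_ideal_sum[OF C'] gen_ideal_mult_left[OF C']) blast+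
qed

lemma gen_ideal_image_gen_ideal:
  assumes C: "is_subsemiring C" and C': "is_subsemiring C'"
    and h: "\<And>a b. h (a + b) = h a + h b" "\<And>a b. h (a * b) = h a * h b" "h 0 = 0" "h ` C \<subseteq> C'"
  shows "gen_ideal C' (h ` gen_ideal C G) = gen_ideal C' (h ` G)"
proof
  have "h ` G \<subseteq> gen_ideal C' (h ` G)"
    using generator_in_gen_ideal[OF C', of _ "h ` G"] by blast
  then have "h ` gen_ideal C G \<subseteq> gen_ideal C' (h ` G)"
    using hom_in_gen_ideal[OF C' h] by (simp add: image_subset_iff)
  then show "gen_ideal C' (h ` gen_ideal C G) \<subseteq> gen_ideal C' (h ` G)"
    by (rule gen_ideal_subset[OF C'])
  have "h ` G \<subseteq> h ` gen_ideal C G"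
    using generator_in_gen_ideal[OF C, of _ G] by blast
  then have "h ` G \<subseteq> gen_ideal C' (h ` gen_ideal C G)"
    using generator_in_gen_ideal[OF C', of _ "h ` gen_ideal C G"] by blast
  then show "gen_ideal C' (h ` G) \<subseteq> gen_ideal C' (h ` gen_ideal C G)"
    by (rule gen_ideal_subset[OF C'])
qed

definition products :: "nat \<Rightarrow> 'a set \<Rightarrow> 'a::comm_monoid_mult set" where
  "products r G = {(\<Prod>i<r. g i) | g. \<forall>i<r. g i \<in> G}"

lemma ideal_pow_eq_gen_ideal_products: "ideal_pow C J r = gen_ideal C (products r J)"
  by (simp add: ideal_pow_def products_def)

lemma products_0 [simp]: "products 0 G = {1}"
  by (simp add: products_def)

lemma products_Suc: "products (Suc r) G = {x * y | x y. x \<in> products r G \<and> y \<in> G}"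
proof safe
  fix z
  assume "z \<in> products (Suc r) G"
  then obtain g where "z = (\<Prod>i<Suc r. g i)" "\<forall>i<Suc r. g i \<in> G"
    by (auto simp: products_def)
  then show "\<exists>x y. z = x * y \<and> x \<in> products r G \<and> y \<in> G"
    unfolding products_def by (intro exI[of _ "\<Prod>i<r. g i"] exI[of _ "g r"]) auto
next
  fix x y
  assume "x \<in> products r G" "y \<in> G"
  then obtain g where "x = (\<Prod>i<r. g i)" "\<forall>i<r. g i \<in> G"
    by (auto simp: products_def)
  then have "x * y = (\<Prod>i<Suc r. (g(r := y)) i)" "\<forall>i<Suc r. (g(r := y)) i \<in> G"
    using \<open>y \<in> G\<close> by (auto intro!: prod.cong)
  then show "x * y \<in> products (Suc r) G"
    unfolding products_def by blast
qed

lemma products_mono: "G \<subseteq> H \<Longrightarrow> products r G \<subseteq> products r H"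
  by (auto simp: products_def)

lemma image_products:
  assumes "\<And>x y. h (x * y) = h x * h y" "h 1 = 1"
  shows "h ` products r G = products r (h ` G)"
proof (induction r)
  case (Suc r)
  have "h ` products (Suc r) G = {h (x * y) | x y. x \<in> products r G \<and> y \<in> G}"
    unfolding products_Suc by blast
  also have "\<dots> = {h x * h y | x y. x \<in> products r G \<and> y \<in> G}"
    by (simp only: assms(1))
  also have "\<dots> = {a * b | a b. a \<in> h ` products r G \<and> b \<in> h ` G}"
    by blast
  finally show ?case
    by (simp add: Suc.IH products_Suc)
qed (simp add: assms(2))

lemma ideal_pow_gen_ideal:
  assumes C: "is_subsemiring C"
  shows "ideal_pow C (gen_ideal C G) r = gen_ideal C (products r G)"
proof
  have "products r (gen_ideal C G) \<subseteq> gen_ideal C (products r G)"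
  proof (induction r)
    case 0
    show ?case
      using generator_in_gen_ideal[OF C] by simp
  next
    case (Suc r)
    show ?case
    proof
      fix z
      assume "z \<in> products (Suc r) (gen_ideal C G)"
      then obtain x y where "z = x * y" "x \<in> products r (gen_ideal C G)" "y \<in> gen_ideal C G"
        by (auto simp: products_Suc)
      with Suc.IH show "z \<in> gen_ideal C (products (Suc r) G)"
        unfolding products_Suc by (blast intro: gen_ideal_mult[OF C])
    qed
  qed
  then show "ideal_pow C (gen_ideal C G) r \<subseteq> gen_ideal C (products r G)"
    unfolding ideal_pow_eq_gen_ideal_products by (rule gen_ideal_subset[OF C])
  have "products r G \<subseteq> products r (gen_ideal C G)"
    by (intro products_mono subsetI generator_in_gen_ideal[OF C])
  then have "products r G \<subseteq> gen_ideal C (products r (gen_ideal C G))"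
    using generator_in_gen_ideal[OF C, of _ "products r (gen_ideal C G)"] by blast
  then show "gen_ideal C (products r G) \<subseteq> ideal_pow C (gen_ideal C G) r"
    unfolding ideal_pow_eq_gen_ideal_products by (rule gen_ideal_subset[OF C])
qed

section \<open>Substituting along the fibres of a map\<close>

definition fibre_subst :: "('w \<Rightarrow> 'v) \<Rightarrow> 'w set \<Rightarrow> ('v, 'k::comm_ring_1) mpoly \<Rightarrow> ('w, 'k) mpoly" where
  "fibre_subst f K = subst (\<lambda>v. \<Prod>k\<in>{k\<in>K. f k = v}. var k)"

definition pullback_exp :: "('w \<Rightarrow> 'v) \<Rightarrow> 'w set \<Rightarrow> ('v \<Rightarrow>\<^sub>0 nat) \<Rightarrow> ('w \<Rightarrow>\<^sub>0 nat)" where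
  "pullback_exp f K \<alpha> = Abs_poly_mapping (\<lambda>k. if k \<in> K then Poly_Mapping.lookup \<alpha> (f k) else 0)"

lemma lookup_pullback_exp:
  assumes "finite K"
  shows "Poly_Mapping.lookup (pullback_exp f K \<alpha>) k = (if k \<in> K then Poly_Mapping.lookup \<alpha> (f k) else 0)"
proof -
  have "finite {k. (if k \<in> K then Poly_Mapping.lookup \<alpha> (f k) else 0) \<noteq> 0}"
    by (rule finite_subset[OF _ assms]) auto
  then show ?thesis
    by (simp add: pullback_exp_def)
qed

lemma pullback_exp_lcm_exp:
  assumes "finite K" "finite E" "E \<noteq> {}"
  shows "pullback_exp f K (lcm_exp E) = lcm_exp (pullback_exp f K ` E)"
  by (rule poly_mapping_eqI) (use assms in \<open>auto simp: lookup_pullback_exp lookup_lcm_exp image_image\<close>)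

lemma fibre_subst_prod_var:
  assumes "finite K" "finite F"
  shows "fibre_subst f K (\<Prod>v\<in>F. var v) = (\<Prod>k\<in>{k\<in>K. f k \<in> F}. var k)"
proof -
  have "fibre_subst f K (\<Prod>v\<in>F. var v) = (\<Prod>v\<in>F. \<Prod>k\<in>{k\<in>{k\<in>K. f k \<in> F}. f k = v}. var k)"
    unfolding fibre_subst_def subst_prod subst_var by (intro prod.cong) auto
  also have "\<dots> = (\<Prod>k\<in>{k\<in>K. f k \<in> F}. var k)"
    by (rule prod.group) (use assms in auto)
  finally show ?thesis .
qed

lemma fibre_subst_mon:
  assumes "finite K"
  shows "fibre_subst f K (mon \<alpha>) = mon (pullback_exp f K \<alpha>)"
proof -
  let ?K = "{k\<in>K. f k \<in> Poly_Mapping.keys \<alpha>}"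
  have "fibre_subst f K (mon \<alpha>) =
      (\<Prod>v\<in>Poly_Mapping.keys \<alpha>. (\<Prod>k\<in>{k\<in>K. f k = v}. var k) ^ Poly_Mapping.lookup \<alpha> v)"
    by (simp add: fibre_subst_def subst_mon subst_exp_def)
  also have "\<dots> = (\<Prod>v\<in>Poly_Mapping.keys \<alpha>.
      \<Prod>k\<in>{k\<in>?K. f k = v}. var k ^ Poly_Mapping.lookup \<alpha> (f k))"
    by (auto simp: prod_power_distrib intro!: prod.cong)
  also have "\<dots> = (\<Prod>k\<in>?K. var k ^ Poly_Mapping.lookup \<alpha> (f k))"
    by (rule prod.group) (use assms in auto)
  also have "\<dots> = mon (\<Sum>k\<in>?K. Poly_Mapping.single k (Poly_Mapping.lookup \<alpha> (f k)))"
    by (simp add: var_power prod_mon)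
  also have "(\<Sum>k\<in>?K. Poly_Mapping.single k (Poly_Mapping.lookup \<alpha> (f k))) = pullback_exp f K \<alpha>"
    by (rule poly_mapping_eqI)
      (use assms in \<open>simp add: lookup_sum lookup_single when_def lookup_pullback_exp in_keys_iff\<close>)
  finally show ?thesis .
qed

lemma fibre_subst_mon_lcm:
  assumes "finite K" "finite S" "S \<noteq> {}" "\<And>s. s \<in> S \<Longrightarrow> is_monomial s"
  shows "fibre_subst f K (mon_lcm S) = mon_lcm (fibre_subst f K ` S)"
proof -
  obtain E where S: "S = mon ` E" and "finite E"
    using obtain_exps_of_monomials assms(2,4) by blast
  with assms(3) have E: "finite E" "E \<noteq> {}"
    by auto
  have "fibre_subst f K (mon_lcm S) = mon (lcm_exp (pullback_exp f K ` E))"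
    by (simp add: S mon_lcm_mon[OF E] fibre_subst_mon pullback_exp_lcm_exp E assms(1))
  also have "\<dots> = mon_lcm (mon ` pullback_exp f K ` E)"
    using E by (simp add: mon_lcm_mon)
  also have "mon ` pullback_exp f K ` E = fibre_subst f K ` S"
    by (simp add: S image_image fibre_subst_mon assms(1))
  finally show ?thesis .
qed

lemma fibre_subst_in_polys: "fibre_subst f K p \<in> polys K"
  unfolding fibre_subst_def
  by (intro subst_in_polys subsemiring_prod[OF is_subsemiring_polys] var_in_polys) auto

section \<open>The homomorphism \<psi>\<close>

lemma psi_eq_fibre_subst: "psi n q m = fibre_subst (calA q m) {1..n}"
proof -
  have "psi_var n q m = (\<lambda>A. \<Prod>k\<in>{k\<in>{1..n}. calA q m k = A}. var k)"
  proof
    fix A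
    show "psi_var n q m A = (\<Prod>k\<in>{k\<in>{1..n}. calA q m k = A}. var k)"
    proof (cases "\<exists>k\<in>{1..n}. A = calA q m k")
      case False
      then have "{k\<in>{1..n}. calA q m k = A} = {}"
        by auto
      then show ?thesis
        unfolding psi_var_def if_not_P[OF False] by (simp only: prod.empty)
    qed (simp add: psi_var_def)
  qed
  then show ?thesis
    by (simp add: psi_def fibre_subst_def)
qed

lemma finite_Yvars: "finite (Yvars q)"
  by (rule finite_subset[of _ "Pow {1..q}"]) (auto simp: Yvars_def)

lemma finite_QD: "finite (QD q D)"
  by (rule finite_subset[OF _ finite_Yvars[of q]]) (auto simp: QD_def)

lemma calA_in_QD:
  assumes monomial: "\<And>j. j \<in> {1..q} \<Longrightarrow> is_monomial (m j)"
    and Dsub: "D \<subseteq> {1..q} \<times> (Pow {1..q} - {{}})"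
    and Ddiv: "\<forall>(b, B)\<in>D. m b dvd mon_lcm (m ` B)"
    and "i \<in> calA q m k"
  shows "calA q m k \<in> QD q D"
proof -
  have "calA q m k \<in> Yvars q"
    using assms(4) by (auto simp: Yvars_def calA_def)
  moreover have "calA q m k \<inter> B \<noteq> {}" if "(b, B) \<in> D" "b \<in> calA q m k" for b B
  proof -
    have B: "finite B" "B \<noteq> {}" "B \<subseteq> {1..q}"
      using that(1) Dsub by (auto intro: finite_subset)
    have "var k dvd m b"
      using that(2) by (simp add: calA_def)
    also have "m b dvd mon_lcm (m ` B)"
      using Ddiv that(1) by blast
    moreover have "\<And>s. s \<in> m ` B \<Longrightarrow> is_monomial s"
      using B(3) monomial by auto
    ultimately obtain j where "j \<in> B" "var k dvd m j"
      using var_dvd_mon_lcm_iff[of "m ` B" k] B(1,2) by auto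
    then have "j \<in> calA q m k \<inter> B"
      using B(3) by (auto simp: calA_def)
    then show ?thesis
      by blast
  qed
  ultimately show ?thesis
    by (auto simp: QD_def)
qed

lemma psi_prod_var:
  assumes "finite F" "i \<in> {1..q}" "squarefree_monomial_in {1..n} (m i)"
    and "\<And>k. k \<in> {1..n} \<Longrightarrow> calA q m k \<in> F \<longleftrightarrow> i \<in> calA q m k"
  shows "psi n q m (\<Prod>A\<in>F. var A) = m i"
proof -
  have "psi n q m (\<Prod>A\<in>F. var A) = (\<Prod>k\<in>{k\<in>{1..n}. calA q m k \<in> F}. var k)"
    by (simp add: psi_eq_fibre_subst fibre_subst_prod_var assms(1))
  also have "{k\<in>{1..n}. calA q m k \<in> F} = {k\<in>{1..n}. var k dvd m i}"
    using assms(2,4) by (auto simp: calA_def)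
  finally show ?thesis
    using squarefree_monomial_eq_prod_vars[OF assms(3)] by simp
qed

lemma psi_eps:
  assumes "i \<in> {1..q}" "squarefree_monomial_in {1..n} (m i)"
  shows "psi n q m (eps q i) = m i"
  unfolding eps_def
  by (rule psi_prod_var) (use assms finite_Yvars in \<open>auto simp: Yvars_def calA_def\<close>)

lemma psi_epsD:
  assumes "\<And>j. j \<in> {1..q} \<Longrightarrow> is_monomial (m j)"
    and "D \<subseteq> {1..q} \<times> (Pow {1..q} - {{}})"
    and "\<forall>(b, B)\<in>D. m b dvd mon_lcm (m ` B)"
    and "i \<in> {1..q}" "squarefree_monomial_in {1..n} (m i)"
  shows "psi n q m (epsD q D i) = m i"
  unfolding epsD_def
  by (rule psi_prod_var) (use assms calA_in_QD[OF assms(1-3)] finite_QD in auto)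

lemma psi_epsD_pow:
  assumes "\<And>i. i \<in> {1..q} \<Longrightarrow> psi n q m (epsD q D i) = m i"
  shows "psi n q m (epsD_pow q D a) = mpow q m a"
  using assms unfolding epsD_pow_def mpow_def psi_def by (simp add: subst_prod subst_power)

lemma gen_ideal_psi_ideal_pow:
  assumes "\<And>i. i \<in> {1..q} \<Longrightarrow> psi n q m (epsD q D i) = m i"
  shows "gen_ideal (polys {1..n}) (psi n q m ` ideal_pow (polys (Yvars q)) (ED q D) r) =
    ideal_pow (polys {1..n}) (gen_ideal (polys {1..n}) (m ` {1..q})) r"
proof -
  have "psi n q m ` epsD q D ` {1..q} = m ` {1..q}"
    using assms by (simp add: image_image)
  then have "psi n q m ` products r (epsD q D ` {1..q}) = products r (m ` {1..q})"
    by (simp add: image_products psi_def subst_mult)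
  moreover have "psi n q m ` polys (Yvars q) \<subseteq> polys {1..n}"
    using fibre_subst_in_polys by (auto simp: psi_eq_fibre_subst)
  ultimately show ?thesis
    unfolding ED_def
    by (simp add: ideal_pow_gen_ideal is_subsemiring_polys gen_ideal_image_gen_ideal
        psi_def subst_add subst_mult)
qed

lemma psi_mon_lcm_epsD_pow:
  fixes m :: "nat \<Rightarrow> (nat, 'k::comm_ring_1) mpoly"
  assumes "\<And>i. i \<in> {1..q} \<Longrightarrow> psi n q m (epsD q D i) = m i"
    and "finite L" "L \<noteq> {}"
  shows "psi n q m (mon_lcm ((\<lambda>l. epsD_pow q D (a l)) ` L)) = mon_lcm ((\<lambda>l. mpow q m (a l)) ` L)"
proof -
  have "is_monomial (epsD_pow q D b :: (nat set, 'k) mpoly)" for b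
    unfolding epsD_pow_def epsD_def by (intro is_monomial_prod is_monomial_power is_monomial_var)
  then have "psi n q m (mon_lcm ((\<lambda>l. epsD_pow q D (a l)) ` L)) =
      mon_lcm (psi n q m ` (\<lambda>l. epsD_pow q D (a l)) ` L)"
    unfolding psi_eq_fibre_subst using assms(2,3) by (intro fibre_subst_mon_lcm) auto
  also have "psi n q m ` (\<lambda>l. epsD_pow q D (a l)) ` L = (\<lambda>l. mpow q m (a l)) ` L"
    using psi_epsD_pow[OF assms(1)] by (simp add: image_image)
  finally show ?thesis .
qed

theorem proposition4p2:
  fixes n q :: nat
    and m :: "nat \<Rightarrow> (nat, 'k::field) mpoly"
    and D :: "(nat \<times> nat set) set"
  assumes sqf: "\<forall>j\<in>{1..q}. squarefree_monomial_in {1..n} (m j)"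
    and finD: "finite D"
    and Dsub: "D \<subseteq> {1..q} \<times> (Pow {1..q} - {{}})"
    and Ddiv: "\<forall>(b,B)\<in>D. m b dvd mon_lcm (m ` B)"
  defines "R \<equiv> polys {1..n} :: (nat, 'k) mpoly set"
    and "I \<equiv> gen_ideal (polys {1..n}) (m ` {1..q})"
  shows "(\<forall>i\<in>{1..q}. psi n q m (epsD q D i) = psi n q m (eps q i)
                    \<and> psi n q m (eps q i) = m i)
    \<and> (\<forall>r\<ge>1. \<forall>a\<in>Nrq q r. psi n q m (epsD_pow q D a) = mpow q m a)
    \<and> (\<forall>r>0. gen_ideal R (psi n q m ` ideal_pow (polys (Yvars q)) (ED q D) r) = ideal_pow R I r)
    \<and> (\<forall>r\<ge>1. \<forall>t::nat\<ge>1. \<forall>a::nat \<Rightarrow> nat \<Rightarrow> nat. (\<forall>l\<in>{1..t}. a l \<in> Nrq q r) \<longrightarrow>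
         psi n q m (mon_lcm ((\<lambda>l. epsD_pow q D (a l)) ` {1..t}))
           = mon_lcm ((\<lambda>l. mpow q m (a l)) ` {1..t}))"
proof -
  have monomial: "is_monomial (m j)" if "j \<in> {1..q}" for j
    using sqf that by (auto simp: squarefree_monomial_in_def is_monomial_def)
  have eps: "psi n q m (eps q i) = m i" if "i \<in> {1..q}" for i
    using psi_eps that sqf by blast
  have epsD: "psi n q m (epsD q D i) = m i" if "i \<in> {1..q}" for i
    using psi_epsD[OF monomial Dsub Ddiv] that sqf by blast
  have lcm: "psi n q m (mon_lcm ((\<lambda>l. epsD_pow q D (a l)) ` {1..t})) =
      mon_lcm ((\<lambda>l. mpow q m (a l)) ` {1..t})"
    if "t \<ge> 1" for t :: nat and a :: "nat \<Rightarrow> nat \<Rightarrow> nat"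
    using psi_mon_lcm_epsD_pow[OF epsD, of "{1..t}"] that by simp
  show ?thesis
    unfolding R_def I_def
    using eps epsD psi_epsD_pow[OF epsD] gen_ideal_psi_ideal_pow[OF epsD] lcm
    by auto
qed

end
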